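(* Let $n\ge1$. For all $w_1,w_2\in\mathrm{BB}_n$ and $\gamma\in\Gamma_{n+1}=\{1,e_n,X_n,Y_{n+1}\}$ one has $\epsilon_n(w_1\gamma w_2)=\mathrm{tr}(\gamma)\,w_1w_2$ and $\mathrm{tr}(w_1\gamma w_2)=\mathrm{tr}(\gamma)\,\mathrm{tr}(w_1w_2)$.
   Context: $R$ is an integral domain with units $q,\lambda,x,q_0$ and elements $A,q_1$; $\delta=q-q^{-1}$; standing assumptions $x\delta=\delta-\lambda+\lambda^{-1}$, $q_0=q^{-1}$, $A(1-q_0\lambda)=q_1x$. $\mathrm{BB}_n$ is the unital associative $R$-algebra generated by invertible $Y,X_1,\dots,X_{n-1}$ and elements $e_1,\dots,e_{n-1}$ with relations: $X_iX_j=X_jX_i$, $e_ie_j=e_je_i$ for $|i-j|>1$; $X_iX_jX_i=X_jX_iX_j$ for $|i-j|=1$; $X_ie_i=e_iX_i=\lambda e_i$; $e_i^2=xe_i$; $X_i^{-1}=X_i-\delta+\delta e_i$; $X_i^2=1+\delta X_i-\delta\lambda e_i$; for $|i-j|=1$ (signs consistent): $e_iX_j^{\pm1}e_i=\lambda^{\mp1}e_i$, $e_ie_je_i=e_i$, $e_iX_j^{\pm1}X_i^{\pm1}=X_j^{\pm1}X_i^{\pm1}e_j$, $X_i^{\pm1}e_je_i=X_j^{\mp1}e_i$, $e_ie_jX_i^{\pm1}=e_iX_j^{\mp1}$, $e_iX_j^{\pm1}X_i^{\pm1}=e_ie_j$, $X_i^{\pm1}X_j^{\pm1}e_i=e_je_i$,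 $X_ie_jX_i^{-1}=X_j^{-1}e_iX_j$, $X_ie_jX_i=X_j^{-1}e_iX_j^{-1}$; and $X_1YX_1Y=YX_1YX_1$, $Y^2=q_1Y+q_0$, $YX_1Ye_1=e_1$, $YX_i=X_iY$ ($i>1$), $e_1Ye_1=Ae_1$; it is assumed that $e_1\in\mathrm{BB}_2$ is nonzero with $re_1=0\Rightarrow r=0$, and $e_1,Ye_1$ linearly independent. $\mathrm{BB}_0=R$; $\mathrm{BB}_m\subset\mathrm{BB}_n$ ($m\le n$) as the subalgebra generated by $Y,X_i,e_i$ with $i\le m-1$. $Y_{n+1}:=X_nX_{n-1}\cdots X_1YX_1^{-1}\cdots X_n^{-1}$. Hypothesis (assumed): for every $n$ the map $\mathrm{BB}_n\to\mathrm{BB}_{n+2}$, $a\mapsto x^{-1}ae_{n+1}$, is injective. Conditional expectation: for $a\in\mathrm{BB}_{n+1}$, $\epsilon_n(a)\in\mathrm{BB}_n$ is the element with $e_{n+1}ae_{n+1}=x\,\epsilon_n(a)e_{n+1}$ in $\mathrm{BB}_{n+2}$. Trace: $\mathrm{tr}(r)=r$ on $\mathrm{BB}_0=R$ and $\mathrm{tr}(a)=\mathrm{tr}(\epsilon_{n-1}(a))$ for $a\in\mathrm{BB}_n$. *)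

theory Defs
  imports Main
begin

text \<open>
  The algebras BB_0 \<subseteq> BB_1 \<subseteq> ... are modelled inside one ambient ring 'a
  (their union), which is an R-algebra via a ring homomorphism sc : R \<rightarrow> 'a
  with central image. Units of R are given together with their inverses:
  qi = q^-1 (= q_0), lami = lambda^-1, xi = x^-1.
  Generators: Y, X i, e i (i \<ge> 1).
\<close>

definition delta :: "'r::idom \<Rightarrow> 'r \<Rightarrow> 'r" where
  "delta q qi = q - qi"

definition Xinv :: "('r::idom \<Rightarrow> 'a::ring_1) \<Rightarrow> 'r \<Rightarrow> 'r \<Rightarrow> (nat \<Rightarrow> 'a) \<Rightarrow> (nat \<Rightarrow> 'a) \<Rightarrow> nat \<Rightarrow> 'a" where
  "Xinv sc q qi X e i = X i - sc (delta q qi) + sc (delta q qi) * e i"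

text \<open>Yn ... k = Y_{k+1} = X_k ... X_1 Y X_1^{-1} ... X_k^{-1}\<close>
fun Yn :: "('r::idom \<Rightarrow> 'a::ring_1) \<Rightarrow> 'r \<Rightarrow> 'r \<Rightarrow> 'a \<Rightarrow> (nat \<Rightarrow> 'a) \<Rightarrow> (nat \<Rightarrow> 'a) \<Rightarrow> nat \<Rightarrow> 'a" where
  "Yn sc q qi Y X e 0 = Y"
| "Yn sc q qi Y X e (Suc k) = X (Suc k) * Yn sc q qi Y X e k * Xinv sc q qi X e (Suc k)"

text \<open>BB_n as the subalgebra generated by R, Y (if n \<ge> 1), X_i, e_i (1 \<le> i \<le> n-1).
  (Inverses of Y and X_i are polynomials in the generators.) BB_0 = R.\<close>
inductive_set BBset :: "('r::idom \<Rightarrow> 'a::ring_1) \<Rightarrow> 'a \<Rightarrow> (nat \<Rightarrow> 'a) \<Rightarrow> (nat \<Rightarrow> 'a) \<Rightarrow> nat \<Rightarrow> 'a set"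
  for sc Y X e n where
  scal: "sc r \<in> BBset sc Y X e n"
| genY: "1 \<le> n \<Longrightarrow> Y \<in> BBset sc Y X e n"
| genX: "1 \<le> i \<Longrightarrow> i < n \<Longrightarrow> X i \<in> BBset sc Y X e n"
| gene: "1 \<le> i \<Longrightarrow> i < n \<Longrightarrow> e i \<in> BBset sc Y X e n"
| add: "a \<in> BBset sc Y X e n \<Longrightarrow> b \<in> BBset sc Y X e n \<Longrightarrow> a + b \<in> BBset sc Y X e n"
| mult: "a \<in> BBset sc Y X e n \<Longrightarrow> b \<in> BBset sc Y X e n \<Longrightarrow> a * b \<in> BBset sc Y X e n"

definition BB_axioms ::
  "('r::idom \<Rightarrow> 'a::ring_1) \<Rightarrow> 'r \<Rightarrow> 'r \<Rightarrow> 'r \<Rightarrow> 'r \<Rightarrow> 'r \<Rightarrow> 'r \<Rightarrow> 'r \<Rightarrow> 'r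
    \<Rightarrow> 'a \<Rightarrow> (nat \<Rightarrow> 'a) \<Rightarrow> (nat \<Rightarrow> 'a) \<Rightarrow> bool" where
  "BB_axioms sc q qi lam lami x xi A q1 Y X e \<longleftrightarrow>
    \<comment> \<open>R-algebra structure\<close>
    sc 0 = 0 \<and> sc 1 = 1 \<and> (\<forall>r s. sc (r + s) = sc r + sc s) \<and> (\<forall>r s. sc (r * s) = sc r * sc s) \<and>
    (\<forall>r a. sc r * a = a * sc r) \<and>
    \<comment> \<open>units and standing assumptions on parameters (q_0 = qi)\<close>
    q * qi = 1 \<and> lam * lami = 1 \<and> x * xi = 1 \<and>
    x * delta q qi = delta q qi - lam + lami \<and>
    A * (1 - qi * lam) = q1 * x \<and>
    \<comment> \<open>invertibility of the generators\<close>
    (\<exists>Yi. Y * Yi = 1 \<and> Yi * Y = 1) \<and>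
    (\<forall>i\<ge>1. X i * Xinv sc q qi X e i = 1 \<and> Xinv sc q qi X e i * X i = 1) \<and>
    \<comment> \<open>relations involving one index\<close>
    (\<forall>i\<ge>1. X i * e i = sc lam * e i \<and> e i * X i = sc lam * e i \<and>
            e i * e i = sc x * e i \<and>
            X i * X i = 1 + sc (delta q qi) * X i - sc (delta q qi * lam) * e i) \<and>
    \<comment> \<open>far commutation, |i - j| > 1\<close>
    (\<forall>i\<ge>1. \<forall>j\<ge>1. (i + 1 < j \<or> j + 1 < i) \<longrightarrow>
        X i * X j = X j * X i \<and> e i * e j = e j * e i \<and> X i * e j = e j * X i) \<and>
    \<comment> \<open>adjacent relations, |i - j| = 1\<close>
    (\<forall>i\<ge>1. \<forall>j\<ge>1. (i = j + 1 \<or> j = i + 1) \<longrightarrow>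
        (let Xi = Xinv sc q qi X e in
        X i * X j * X i = X j * X i * X j \<and>
        e i * X j * e i = sc lami * e i \<and> e i * Xi j * e i = sc lam * e i \<and>
        e i * e j * e i = e i \<and>
        e i * X j * X i = X j * X i * e j \<and> e i * Xi j * Xi i = Xi j * Xi i * e j \<and>
        X i * e j * e i = Xi j * e i \<and> Xi i * e j * e i = X j * e i \<and>
        e i * e j * X i = e i * Xi j \<and> e i * e j * Xi i = e i * X j \<and>
        e i * X j * X i = e i * e j \<and> e i * Xi j * Xi i = e i * e j \<and>
        X i * X j * e i = e j * e i \<and> Xi i * Xi j * e i = e j * e i \<and>
        X i * e j * Xi i = Xi j * e i * X j \<and>
        X i * e j * X i = Xi j * e i * Xi j)) \<and>
    \<comment> \<open>relations involving Y\<close>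
    X 1 * Y * X 1 * Y = Y * X 1 * Y * X 1 \<and>
    Y * Y = sc q1 * Y + sc qi \<and>
    Y * X 1 * Y * e 1 = e 1 \<and>
    (\<forall>i>1. Y * X i = X i * Y \<and> Y * e i = e i * Y) \<and>
    e 1 * Y * e 1 = sc A * e 1 \<and>
    \<comment> \<open>nondegeneracy assumptions\<close>
    e 1 \<noteq> 0 \<and> (\<forall>r. sc r * e 1 = 0 \<longrightarrow> r = 0) \<and>
    (\<forall>r s. sc r * e 1 + sc s * (Y * e 1) = 0 \<longrightarrow> r = 0 \<and> s = 0) \<and>
    \<comment> \<open>hypothesis: a \<mapsto> x^-1 a e_{n+1} is injective on BB_n, for every n\<close>
    (\<forall>n. \<forall>a\<in>BBset sc Y X e n. \<forall>b\<in>BBset sc Y X e n.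
        sc xi * a * e (n + 1) = sc xi * b * e (n + 1) \<longrightarrow> a = b)"

definition eps :: "('r::idom \<Rightarrow> 'a::ring_1) \<Rightarrow> 'r \<Rightarrow> 'a \<Rightarrow> (nat \<Rightarrow> 'a) \<Rightarrow> (nat \<Rightarrow> 'a) \<Rightarrow> nat \<Rightarrow> 'a \<Rightarrow> 'a" where
  "eps sc x Y X e n a =
     (THE b. b \<in> BBset sc Y X e n \<and> e (n + 1) * a * e (n + 1) = sc x * b * e (n + 1))"

text \<open>Trace of an element regarded in BB_n: tr(a) = tr(epsilon_{n-1}(a)), tr(r) = r on BB_0 = R
  (values in BB_0 = image of sc).\<close>
fun trn :: "('r::idom \<Rightarrow> 'a::ring_1) \<Rightarrow> 'r \<Rightarrow> 'a \<Rightarrow> (nat \<Rightarrow> 'a) \<Rightarrow> (nat \<Rightarrow> 'a) \<Rightarrow> nat \<Rightarrow> 'a \<Rightarrow> 'a" where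
  "trn sc x Y X e 0 a = a"
| "trn sc x Y X e (Suc n) a = trn sc x Y X e n (eps sc x Y X e n a)"

end

theory Submission
  imports Defs
begin

text \<open>
  The expectation eps_n a is defined (through THE) only when e_(n+1) a e_(n+1) lies in
  BB_n e_(n+1), so the heart of the matter is that e_(k+1) BB_(k+1) e_(k+1) \<subseteq> BB_k e_(k+1)
  for all k. This is proved by induction on k together with BB_(k+1) = BB_k Gamma_k BB_k
  (additive span), where Gamma_k = {1, e_k, X_k, J_k, e_k J_k} and
  J_k = X_k ... X_1 Y X_1 ... X_k. For the spanning statement at k = p + 1 one shows that
  X_k and e_k map BB_k Gamma_k BB_k into itself: writing the left factor from BB_k as an
  element of BB_p Gamma_p BB_p, everything reduces to products g gamma' gamma with
  g in {X_k, e_k}, gamma' in Gamma_p and gamma in Gamma_k, which the defining relations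
  rewrite into BB_k Gamma_k BB_k; the compression statement for p is needed when gamma
  involves e_k. The spanning statement in turn reduces compression at k to the finitely
  many elements e_(k+1) gamma e_(k+1) with gamma in Gamma_k.

  Once eps_n exists it is a BB_n-bimodule map, since e_(n+1) commutes with BB_n, and for
  gamma in {1, e_n, X_n, Y_(n+1)} the element e_(n+1) gamma e_(n+1) is a scalar multiple of
  e_(n+1) (with factors x, 1, lambda^-1, A), which gives both identities.
\<close>

lemma mult_eq_tail:
  fixes a b c z :: "'a::semigroup_mult"
  shows "a * b = c \<Longrightarrow> a * (b * z) = c * z"
  by (simp add: mult.assoc[symmetric])

lemma mult3_eq_tail:
  fixes a b c r z :: "'a::semigroup_mult"
  shows "a * b * c = r \<Longrightarrow> a * (b * (c * z)) = r * z"
  by (simp add: mult.assoc[symmetric])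

lemma commute_imp_left_commute:
  fixes a b z :: "'a::semigroup_mult"
  shows "a * b = b * a \<Longrightarrow> a * (b * z) = b * (a * z)"
  by (simp add: mult.assoc[symmetric])

definition adjacent :: "nat \<Rightarrow> nat \<Rightarrow> bool" where
  "adjacent i j \<longleftrightarrow> 1 \<le> i \<and> 1 \<le> j \<and> (i = j + 1 \<or> j = i + 1)"

lemma adjacent_Suc: "1 \<le> k \<Longrightarrow> adjacent (Suc k) k" "1 \<le> k \<Longrightarrow> adjacent k (Suc k)"
  unfolding adjacent_def by auto

locale BB_algebra =
  fixes sc :: "'r::idom \<Rightarrow> 'a::ring_1" and q qi lam lami x xi A q1 :: 'r
    and Y :: 'a and X e :: "nat \<Rightarrow> 'a"
  assumes axioms: "BB_axioms sc q qi lam lami x xi A q1 Y X e"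
begin

abbreviation "BB \<equiv> BBset sc Y X e"
abbreviation "Xi \<equiv> Xinv sc q qi X e"
abbreviation "\<delta> \<equiv> sc (delta q qi)"
abbreviation "Yk \<equiv> Yn sc q qi Y X e"

lemmas relations = axioms[unfolded BB_axioms_def Let_def]

lemma sc_0: "sc 0 = 0" and sc_1: "sc 1 = 1"
  and sc_add: "sc (r + s) = sc r + sc s" and sc_mult: "sc (r * s) = sc r * sc s"
  and sc_commute: "sc r * a = a * sc r"
  using relations by - (elim conjE; blast)+

lemma q_qi: "q * qi = 1" and x_xi: "x * xi = 1"
  and x_delta: "x * delta q qi = delta q qi - lam + lami"
  using relations by - (elim conjE; blast)+

lemma
  assumes "1 \<le> i"
  shows X_Xi: "X i * Xi i = 1" and Xi_X: "Xi i * X i = 1"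
    and X_e_self: "X i * e i = sc lam * e i" and e_X_self: "e i * X i = sc lam * e i"
    and e_e_self: "e i * e i = sc x * e i"
    and X_X_self: "X i * X i = 1 + \<delta> * X i - sc (delta q qi * lam) * e i"
  using assms relations by - (elim conjE; blast)+

lemma far_commute:
  assumes "1 \<le> i" "1 \<le> j" "i + 1 < j \<or> j + 1 < i"
  shows "X i * X j = X j * X i" and "X i * e j = e j * X i" and "e i * e j = e j * e i"
  using assms relations by - (elim conjE; blast)+

lemma
  assumes "adjacent i j"
  shows X_braid: "X i * X j * X i = X j * X i * X j"
    and e_X_e: "e i * X j * e i = sc lami * e i"
    and e_e_e: "e i * e j * e i = e i"
    and e_X_X_shift: "e i * X j * X i = X j * X i * e j"
    and X_e_e: "X i * e j * e i = Xi j * e i"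
    and Xi_e_e: "Xi i * e j * e i = X j * e i"
    and e_e_X: "e i * e j * X i = e i * Xi j"
    and e_e_Xi: "e i * e j * Xi i = e i * X j"
    and e_X_X: "e i * X j * X i = e i * e j"
    and X_X_e: "X i * X j * e i = e j * e i"
    and X_e_Xi: "X i * e j * Xi i = Xi j * e i * X j"
    and X_e_X: "X i * e j * X i = Xi j * e i * Xi j"
  using assms relations unfolding adjacent_def by - (elim conjE; blast)+

lemma Y_X_Y_X: "X 1 * Y * X 1 * Y = Y * X 1 * Y * X 1"
  and Y_Y: "Y * Y = sc q1 * Y + sc qi"
  and Y_X_Y_e: "Y * X 1 * Y * e 1 = e 1"
  and e_Y_e: "e 1 * Y * e 1 = sc A * e 1"
  using relations by - (elim conjE; blast)+

lemma
  assumes "1 < i"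
  shows Y_X_commute: "Y * X i = X i * Y" and Y_e_commute: "Y * e i = e i * Y"
  using assms relations by - (elim conjE; blast)+

lemma mult_e_inj:
  assumes "a \<in> BB n" "b \<in> BB n" "sc xi * a * e (n + 1) = sc xi * b * e (n + 1)"
  shows "a = b"
proof -
  have "\<forall>n. \<forall>a\<in>BB n. \<forall>b\<in>BB n. sc xi * a * e (n + 1) = sc xi * b * e (n + 1) \<longrightarrow> a = b"
    using relations by (elim conjE) assumption
  with assms show ?thesis by blast
qed

lemma sc_minus: "sc (- r) = - sc r"
  by (metis add.right_inverse minus_unique sc_0 sc_add)

lemma sc_diff: "sc (r - s) = sc r - sc s"
  using sc_add[of r "- s"] sc_minus[of s] by simp

lemma sc_swap: "sc r * sc s = sc s * sc r"
  by (simp add: sc_mult[symmetric] mult.commute)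

lemma sc_left_commute: "a * (sc r * z) = sc r * (a * z)"
  by (metis mult.assoc sc_commute)

lemma sc_x_xi: "sc x * sc xi = 1"
  using x_xi sc_1 by (simp add: sc_mult[symmetric])

lemma Xi_eq: "Xi i = X i - \<delta> + \<delta> * e i"
  unfolding Xinv_def ..

lemma e_Xi_self:
  assumes i: "1 \<le> i"
  shows "e i * Xi i = sc lami * e i"
proof -
  have "e i * Xi i = e i * X i - \<delta> * e i + \<delta> * (e i * e i)"
    unfolding Xi_eq by (simp add: algebra_simps sc_commute sc_left_commute)
  also have "\<dots> = (sc lam - \<delta> + \<delta> * sc x) * e i"
    using e_X_self[OF i] e_e_self[OF i] by (simp add: algebra_simps)
  also have "sc lam - \<delta> + \<delta> * sc x = sc (lam - delta q qi + delta q qi * x)"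
    by (simp add: sc_add sc_diff sc_mult)
  also have "lam - delta q qi + delta q qi * x = lami"
    using x_delta by (simp add: algebra_simps)
  finally show ?thesis .
qed

lemma BB_sc: "sc r \<in> BB n" by (rule BBset.scal)
lemma BB_add: "a \<in> BB n \<Longrightarrow> b \<in> BB n \<Longrightarrow> a + b \<in> BB n" by (rule BBset.add)
lemma BB_mult: "a \<in> BB n \<Longrightarrow> b \<in> BB n \<Longrightarrow> a * b \<in> BB n" by (rule BBset.mult)
lemma BB_Y: "1 \<le> n \<Longrightarrow> Y \<in> BB n" by (rule BBset.genY)
lemma BB_X: "1 \<le> i \<Longrightarrow> i < n \<Longrightarrow> X i \<in> BB n" by (rule BBset.genX)
lemma BB_e: "1 \<le> i \<Longrightarrow> i < n \<Longrightarrow> e i \<in> BB n" by (rule BBset.gene)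

lemma BB_one: "1 \<in> BB n"
  using BB_sc[of 1] sc_1 by simp

lemma BB_uminus: "a \<in> BB n \<Longrightarrow> - a \<in> BB n"
  using BB_mult[OF BB_sc[of "- 1"], of a] sc_minus[of 1] sc_1 by simp

lemma BB_diff: "a \<in> BB n \<Longrightarrow> b \<in> BB n \<Longrightarrow> a - b \<in> BB n"
  using BB_add[of a n "- b"] BB_uminus by simp

lemma BB_Xi: "1 \<le> i \<Longrightarrow> i < n \<Longrightarrow> Xi i \<in> BB n"
  unfolding Xi_eq by (intro BB_add BB_diff BB_mult BB_X BB_e BB_sc)

lemma BB_mono: "a \<in> BB m \<Longrightarrow> m \<le> n \<Longrightarrow> a \<in> BB n"
  by (induction rule: BBset.induct) (auto intro: BBset.intros)

lemma BB_Suc: "a \<in> BB n \<Longrightarrow> a \<in> BB (Suc n)"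
  using BB_mono by simp

lemma BB_commute:
  assumes "c \<in> BB n" "\<And>r. sc r * z = z * sc r" "1 \<le> n \<Longrightarrow> Y * z = z * Y"
    "\<And>i. 1 \<le> i \<Longrightarrow> i < n \<Longrightarrow> X i * z = z * X i"
    "\<And>i. 1 \<le> i \<Longrightarrow> i < n \<Longrightarrow> e i * z = z * e i"
  shows "c * z = z * c"
  using assms(1)
proof induction
  case (add a b)
  then show ?case by (simp add: distrib_left distrib_right)
next
  case (mult a b)
  then show ?case by (metis mult.assoc)
qed (use assms in auto)

lemma BB_commute_e_Suc: "a \<in> BB k \<Longrightarrow> a * e (Suc k) = e (Suc k) * a"
  by (rule BB_commute) (auto simp: Y_e_commute far_commute intro: sc_commute)

lemma BB_commute_X_Suc: "a \<in> BB k \<Longrightarrow> a * X (Suc k) = X (Suc k) * a"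
  by (rule BB_commute) (auto simp: Y_X_commute far_commute intro: sc_commute)

lemma BB_commute_Xi_Suc: "a \<in> BB k \<Longrightarrow> a * Xi (Suc k) = Xi (Suc k) * a"
  unfolding Xi_eq
  by (simp add: algebra_simps BB_commute_X_Suc sc_commute)
    (metis BB_commute_e_Suc mult.assoc sc_commute)

text \<open>Unlike Y_(k+1), the element J k = X_k ... X_1 Y X_1 ... X_k commutes with BB_k.
  Jinv k is its inverse, built from Y^-1 = q (Y - q1).\<close>

fun J :: "nat \<Rightarrow> 'a" where
  "J 0 = Y"
| "J (Suc k) = X (Suc k) * J k * X (Suc k)"

fun Jinv :: "nat \<Rightarrow> 'a" where
  "Jinv 0 = sc q * (Y - sc q1)"
| "Jinv (Suc k) = Xi (Suc k) * Jinv k * Xi (Suc k)"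

lemma J_in_BB: "J k \<in> BB (Suc k)"
proof (induction k)
  case (Suc k)
  then show ?case using BB_Suc[OF Suc.IH] by (simp add: BB_mult BB_X)
qed (simp add: BB_Y)

lemma Jinv_in_BB: "Jinv k \<in> BB (Suc k)"
proof (induction k)
  case (Suc k)
  then show ?case using BB_Suc[OF Suc.IH] by (simp add: BB_mult BB_Xi)
qed (simp add: BB_Y BB_sc BB_mult BB_diff)

lemma J_Jinv: "J k * Jinv k = 1 \<and> Jinv k * J k = 1"
proof (induction k)
  case 0
  have "Y * (Y - sc q1) = sc qi" "(Y - sc q1) * Y = sc qi"
    using Y_Y by (simp_all add: algebra_simps sc_commute[of q1 Y])
  moreover have "sc q * sc qi = 1"
    using q_qi sc_1 by (simp add: sc_mult[symmetric])
  ultimately show ?case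
    by (simp add: sc_left_commute mult.assoc)
next
  case (Suc k)
  have X: "X (Suc k) * (Xi (Suc k) * z) = z" "Xi (Suc k) * (X (Suc k) * z) = z" for z
    using mult_eq_tail[OF X_Xi[of "Suc k"]] mult_eq_tail[OF Xi_X[of "Suc k"]] by auto
  have J: "J k * (Jinv k * z) = z" "Jinv k * (J k * z) = z" for z
    using Suc mult_eq_tail[of "J k" "Jinv k" 1] mult_eq_tail[of "Jinv k" "J k" 1] by auto
  show ?case
    using X_Xi[of "Suc k"] Xi_X[of "Suc k"] by (simp add: mult.assoc X J)
qed

lemma Y_J_commute: "Y * J 1 = J 1 * Y"
  using Y_X_Y_X by (simp add: mult.assoc)

lemma X_J_commute_below: "X (Suc p) * J (Suc (Suc p)) = J (Suc (Suc p)) * X (Suc p)"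
proof -
  let ?j = "Suc p" and ?i = "Suc (Suc p)"
  have adj: "adjacent ?j ?i" "adjacent ?i ?j"
    using adjacent_Suc by auto
  have braid: "X ?j * (X ?i * (X ?j * z)) = X ?i * (X ?j * (X ?i * z))" for z
    using mult3_eq_tail[OF X_braid[OF adj(1)]] by (simp add: mult.assoc)
  have J_X: "J p * (X ?i * z) = X ?i * (J p * z)" for z
    using commute_imp_left_commute[OF BB_commute_X_Suc[OF J_in_BB[of p]]] by simp
  have braid': "X ?i * (X ?j * X ?i) = X ?j * (X ?i * X ?j)"
    using X_braid[OF adj(2)] by (simp add: mult.assoc)
  have J: "J ?i = X ?i * (X ?j * (J p * (X ?j * X ?i)))"
    by (simp add: mult.assoc)
  have "X ?j * J ?i = X ?j * (X ?i * (X ?j * (J p * (X ?j * X ?i))))" by (simp only: J)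
  also have "\<dots> = X ?i * (X ?j * (X ?i * (J p * (X ?j * X ?i))))" by (simp only: braid)
  also have "\<dots> = X ?i * (X ?j * (J p * (X ?i * (X ?j * X ?i))))" by (simp only: J_X)
  also have "\<dots> = X ?i * (X ?j * (J p * (X ?j * (X ?i * X ?j))))" by (simp only: braid')
  also have "\<dots> = J ?i * X ?j" by (simp only: J mult.assoc)
  finally show ?thesis .
qed

lemma e_J_commute_below: "e (Suc p) * J (Suc (Suc p)) = J (Suc (Suc p)) * e (Suc p)"
proof -
  let ?j = "Suc p" and ?i = "Suc (Suc p)"
  have adj: "adjacent ?j ?i" "adjacent ?i ?j"
    using adjacent_Suc by auto
  have shift: "e ?j * (X ?i * (X ?j * z)) = X ?i * (X ?j * (e ?i * z))" for z
    using mult3_eq_tail[OF e_X_X_shift[OF adj(1)]] by (simp add: mult.assoc)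
  have J_e: "e ?i * (J p * z) = J p * (e ?i * z)" for z
    using commute_imp_left_commute[OF BB_commute_e_Suc[OF J_in_BB[of p]]] by simp
  have shift': "e ?i * (X ?j * X ?i) = X ?j * (X ?i * e ?j)"
    using e_X_X_shift[OF adj(2)] by (simp add: mult.assoc)
  have J: "J ?i = X ?i * (X ?j * (J p * (X ?j * X ?i)))"
    by (simp add: mult.assoc)
  have "e ?j * J ?i = e ?j * (X ?i * (X ?j * (J p * (X ?j * X ?i))))" by (simp only: J)
  also have "\<dots> = X ?i * (X ?j * (e ?i * (J p * (X ?j * X ?i))))" by (simp only: shift)
  also have "\<dots> = X ?i * (X ?j * (J p * (e ?i * (X ?j * X ?i))))" by (simp only: J_e)
  also have "\<dots> = X ?i * (X ?j * (J p * (X ?j * (X ?i * e ?j))))" by (simp only: shift')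
  also have "\<dots> = J ?i * e ?j" by (simp only: J mult.assoc)
  finally show ?thesis .
qed

lemma J_Suc_commute:
  assumes J: "c * J m = J m * c" and c: "c \<in> BB m"
  shows "c * J (Suc m) = J (Suc m) * c"
proof -
  have "c * J (Suc m) = X (Suc m) * (c * J m) * X (Suc m)"
    using BB_commute_X_Suc[OF c] by (simp add: mult.assoc[symmetric])
  also have "\<dots> = X (Suc m) * (J m * c) * X (Suc m)"
    using J by simp
  also have "\<dots> = J (Suc m) * c"
    using BB_commute_X_Suc[OF c] by (simp add: mult.assoc)
  finally show ?thesis .
qed

lemma J_commute: "a \<in> BB k \<Longrightarrow> a * J k = J k * a"
proof (induction k arbitrary: a)
  case 0
  then show ?case by (rule BB_commute) (auto intro: sc_commute)
next
  case (Suc m)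
  have below: "c * J (Suc m) = J (Suc m) * c" if "c \<in> BB m" for c
    by (rule J_Suc_commute[OF Suc.IH[OF that] that])
  show ?case
  proof (rule BB_commute[OF Suc.prems])
    show "sc r * J (Suc m) = J (Suc m) * sc r" for r
      by (rule sc_commute)
    show "Y * J (Suc m) = J (Suc m) * Y"
    proof (cases m)
      case 0
      then show ?thesis using Y_J_commute by simp
    next
      case (Suc p)
      then show ?thesis using below[OF BB_Y] by simp
    qed
    show "X i * J (Suc m) = J (Suc m) * X i" if i: "1 \<le> i" "i < Suc m" for i
    proof (cases "i < m")
      case True
      then show ?thesis using below[OF BB_X[OF i(1) True]] by simp
    next
      case False
      with i have "i = m" "1 \<le> m" by auto
      then obtain p where "i = Suc p" "m = Suc p"
        by (cases m) auto
      then show ?thesis using X_J_commute_below by simp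
    qed
    show "e i * J (Suc m) = J (Suc m) * e i" if i: "1 \<le> i" "i < Suc m" for i
    proof (cases "i < m")
      case True
      then show ?thesis using below[OF BB_e[OF i(1) True]] by simp
    next
      case False
      with i have "i = m" "1 \<le> m" by auto
      then obtain p where "i = Suc p" "m = Suc p"
        by (cases m) auto
      then show ?thesis using e_J_commute_below by simp
    qed
  qed
qed

lemma J_X_J_e: "J k * (X (Suc k) * (J k * e (Suc k))) = e (Suc k)"
proof (induction k)
  case 0
  then show ?case using Y_X_Y_e by (simp add: mult.assoc)
next
  case (Suc k)
  let ?j = "Suc k" and ?i = "Suc (Suc k)"
  have adj: "adjacent ?j ?i" "adjacent ?i ?j"
    using adjacent_Suc by auto
  have IH: "J k * (X ?j * (J k * (e ?j * z))) = e ?j * z" for z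
    using mult_eq_tail[OF Suc.IH] by (simp add: mult.assoc)
  have braid: "X ?j * (X ?i * (X ?j * z)) = X ?i * (X ?j * (X ?i * z))" for z
    using mult3_eq_tail[OF X_braid[OF adj(1)]] by (simp add: mult.assoc)
  have J_X: "J k * (X ?i * z) = X ?i * (J k * z)" for z
    using commute_imp_left_commute[OF BB_commute_X_Suc[OF J_in_BB[of k]]] by simp
  have X_X_e: "X ?i * (X ?j * e ?i) = e ?j * e ?i"
    using X_X_e[OF adj(2)] by (simp add: mult.assoc)
  have X_e_e: "X ?j * (X ?i * (e ?j * e ?i)) = e ?i"
    using X_e_e[OF adj(2)] mult_eq_tail[OF X_Xi[of ?j]] by (simp add: mult.assoc)
  have "J ?j * (X ?i * (J ?j * e ?i))
      = X ?j * (J k * (X ?j * (X ?i * (X ?j * (J k * (X ?j * e ?i))))))"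
    by (simp add: mult.assoc)
  also have "\<dots> = X ?j * (J k * (X ?i * (X ?j * (X ?i * (J k * (X ?j * e ?i))))))"
    by (simp only: braid)
  also have "\<dots> = X ?j * (X ?i * (J k * (X ?j * (J k * (X ?i * (X ?j * e ?i))))))"
    by (simp only: J_X)
  also have "\<dots> = X ?j * (X ?i * (J k * (X ?j * (J k * (e ?j * e ?i)))))"
    by (simp only: X_X_e)
  also have "\<dots> = e ?i"
    by (simp only: IH X_e_e)
  finally show ?case .
qed

lemma X_J_e: "X (Suc k) * (J k * e (Suc k)) = Jinv k * e (Suc k)"
proof -
  have "Jinv k * (J k * (X (Suc k) * (J k * e (Suc k)))) = Jinv k * e (Suc k)"
    by (simp add: J_X_J_e)
  then show ?thesis
    using J_Jinv[of k] by (simp add: mult.assoc[symmetric])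
qed

lemma Yk_in_BB: "Yk k \<in> BB (Suc k)"
proof (induction k)
  case (Suc k)
  then show ?case using BB_Suc[OF Suc.IH] by (simp add: BB_mult BB_X BB_Xi)
qed (simp add: BB_Y)

lemma e_Yk_e: "e (Suc k) * Yk k * e (Suc k) = sc A * e (Suc k)"
proof (induction k)
  case 0
  then show ?case using e_Y_e by simp
next
  case (Suc k)
  let ?j = "Suc k" and ?i = "Suc (Suc k)"
  have adj: "adjacent ?i ?j"
    using adjacent_Suc by auto
  have IH: "e ?j * (Yk k * (e ?j * z)) = sc A * (e ?j * z)" for z
    using mult3_eq_tail[OF Suc.IH] by (simp add: mult.assoc)
  have e_X: "e ?i * (X ?j * z) = e ?i * (e ?j * (Xi ?i * z))" for z
    using mult3_eq_tail[OF e_e_Xi[OF adj]] by (simp add: mult.assoc)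
  have Xi_e: "Xi ?j * e ?i = X ?i * (e ?j * e ?i)"
    using X_e_e[OF adj] by (simp add: mult.assoc)
  have Yk_Xi: "Xi ?i * (Yk k * z) = Yk k * (Xi ?i * z)" for z
    using commute_imp_left_commute[OF BB_commute_Xi_Suc[OF Yk_in_BB[of k]]] by simp
  have Xi_X: "Xi ?i * (X ?i * z) = z" for z
    using mult_eq_tail[OF Xi_X[of ?i]] by simp
  have e_e_e: "e ?i * (e ?j * e ?i) = e ?i"
    using e_e_e[OF adj] by (simp add: mult.assoc)
  have "e ?i * Yk ?j * e ?i = e ?i * (X ?j * (Yk k * (Xi ?j * e ?i)))"
    by (simp add: mult.assoc)
  also have "\<dots> = e ?i * (e ?j * (Xi ?i * (Yk k * (X ?i * (e ?j * e ?i)))))"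
    by (simp only: e_X Xi_e)
  also have "\<dots> = e ?i * (e ?j * (Yk k * (e ?j * e ?i)))"
    by (simp only: Yk_Xi Xi_X)
  also have "\<dots> = sc A * e ?i"
    by (simp only: IH sc_left_commute e_e_e)
  finally show ?case .
qed

lemma Xi_X_e:
  assumes adj: "adjacent i j"
  shows "Xi i * (X j * e i) = e j * e i - \<delta> * (X j * e i) + \<delta> * (sc lami * e i)"
proof -
  have "Xi i * (X j * e i) = X i * X j * e i - \<delta> * (X j * e i) + \<delta> * (e i * X j * e i)"
    unfolding Xi_eq by (simp add: algebra_simps)
  then show ?thesis
    using X_X_e[OF adj] e_X_e[OF adj] by simp
qed

lemma J_X_eq: "J p * X (Suc p) = Xi (Suc p) * J (Suc p)"
proof -
  have "Xi (Suc p) * J (Suc p) = (Xi (Suc p) * X (Suc p)) * (J p * X (Suc p))"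
    by (simp add: mult.assoc)
  then show ?thesis
    using Xi_X[of "Suc p"] by simp
qed

lemma e_J_e_below:
  "e (Suc p) * (J (Suc p) * e (Suc (Suc p)))
     = sc lam * (e (Suc p) * (J p * (X (Suc p) * e (Suc (Suc p)))))"
proof -
  have "e (Suc p) * (J (Suc p) * e (Suc (Suc p)))
      = (e (Suc p) * X (Suc p)) * (J p * (X (Suc p) * e (Suc (Suc p))))"
    by (simp add: mult.assoc)
  then show ?thesis
    using e_X_self[of "Suc p"] by (simp add: mult.assoc)
qed

lemma e_X_J_e_e:
  "e (Suc (Suc p)) * (X (Suc p) * (J p * (e (Suc p) * e (Suc (Suc p)))))
     = Jinv p * e (Suc (Suc p))"
proof -
  let ?j = "Suc p" and ?k = "Suc (Suc p)"
  have X_J: "X ?j * (J p * (e ?j * z)) = Jinv p * (e ?j * z)" for z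
    using mult_eq_tail[OF X_J_e[of p]] by (simp add: mult.assoc)
  have e_Jinv: "e ?k * (Jinv p * z) = Jinv p * (e ?k * z)" for z
    using commute_imp_left_commute[OF BB_commute_e_Suc[OF Jinv_in_BB[of p]], symmetric] by simp
  have e_e_e: "e ?k * (e ?j * e ?k) = e ?k"
    using e_e_e[OF adjacent_Suc(1)[of ?j]] by (simp add: mult.assoc)
  show ?thesis
    by (simp only: X_J e_Jinv e_e_e)
qed

lemma e_e_J_e_absorb:
  "e (Suc (Suc p)) * (e (Suc p) * (J p * e (Suc (Suc p)))) = J p * e (Suc (Suc p))"
proof -
  let ?j = "Suc p" and ?k = "Suc (Suc p)"
  have J_e: "J p * e ?k = e ?k * J p"
    using BB_commute_e_Suc[OF J_in_BB[of p]] by simp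
  have "e ?k * (e ?j * (J p * e ?k)) = (e ?k * e ?j * e ?k) * J p"
    by (simp add: J_e mult.assoc)
  then show ?thesis
    using J_e e_e_e[OF adjacent_Suc(1)[of ?j]] by simp
qed

lemma e_e_J_X_e:
  "e (Suc (Suc p)) * (e (Suc p) * (J p * (X (Suc p) * e (Suc (Suc p)))))
     = Jinv p * e (Suc (Suc p))"
proof -
  let ?j = "Suc p" and ?k = "Suc (Suc p)"
  have adj: "adjacent ?k ?j"
    using adjacent_Suc by auto
  have X_e: "X ?j * e ?k = Xi ?k * (e ?j * e ?k)"
    using Xi_e_e[OF adj] by (simp add: mult.assoc)
  have J_Xi: "J p * (Xi ?k * z) = Xi ?k * (J p * z)" for z
    using commute_imp_left_commute[OF BB_commute_Xi_Suc[OF J_in_BB[of p]]] by simp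
  have e_e_Xi: "e ?k * (e ?j * (Xi ?k * z)) = e ?k * (X ?j * z)" for z
    using mult3_eq_tail[OF e_e_Xi[OF adj]] by (simp add: mult.assoc)
  have "e ?k * (e ?j * (J p * (X ?j * e ?k))) = e ?k * (X ?j * (J p * (e ?j * e ?k)))"
    by (simp only: X_e J_Xi e_e_Xi)
  then show ?thesis
    using e_X_J_e_e by simp
qed

lemma e_e_J_e:
  "e (Suc (Suc p)) * (e (Suc p) * (J (Suc p) * e (Suc (Suc p))))
     = sc lam * (Jinv p * e (Suc (Suc p)))"
  by (simp only: e_J_e_below sc_left_commute e_e_J_X_e)

lemma X_e_J_e:
  "X (Suc (Suc p)) * (e (Suc p) * (J (Suc p) * e (Suc (Suc p))))
     = sc lam * (Xi (Suc p) * (Jinv p * e (Suc (Suc p))))"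
proof -
  let ?j = "Suc p" and ?k = "Suc (Suc p)"
  have adj: "adjacent ?k ?j"
    using adjacent_Suc by auto
  have X_e: "X ?j * e ?k = Xi ?k * (e ?j * e ?k)"
    using Xi_e_e[OF adj] by (simp add: mult.assoc)
  have J_Xi: "J p * (Xi ?k * z) = Xi ?k * (J p * z)" for z
    using commute_imp_left_commute[OF BB_commute_Xi_Suc[OF J_in_BB[of p]]] by simp
  have X_e_Xi: "X ?k * (e ?j * (Xi ?k * z)) = Xi ?j * (e ?k * (X ?j * z))" for z
    using mult3_eq_tail[OF X_e_Xi[OF adj]] by (simp add: mult.assoc)
  have "X ?k * (e ?j * (J ?j * e ?k))
      = sc lam * (Xi ?j * (e ?k * (X ?j * (J p * (e ?j * e ?k)))))"
    by (simp only: e_J_e_below sc_left_commute X_e J_Xi X_e_Xi)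
  then show ?thesis
    using e_X_J_e_e by simp
qed

declare J.simps(2) [simp del]

definition Gamma :: "nat \<Rightarrow> 'a set" where
  "Gamma k = (if k = 0 then {1, J 0} else {1, e k, X k, J k, e k * J k})"

lemma Gamma_1: "1 \<in> Gamma k" and Gamma_J: "J k \<in> Gamma k"
  unfolding Gamma_def by auto

lemma
  assumes "1 \<le> k"
  shows Gamma_e: "e k \<in> Gamma k" and Gamma_X: "X k \<in> Gamma k" and Gamma_eJ: "e k * J k \<in> Gamma k"
  using assms unfolding Gamma_def by auto

lemma GammaE:
  assumes "g \<in> Gamma k"
  obtains (one) "g = 1" | (J) "g = J k" | (e) "1 \<le> k" "g = e k" | (X) "1 \<le> k" "g = X k"
    | (eJ) "1 \<le> k" "g = e k * J k"
  using assms unfolding Gamma_def by (cases "k = 0") auto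

lemma Gamma_in_BB: "g \<in> Gamma k \<Longrightarrow> g \<in> BB (Suc k)"
  by (erule GammaE) (auto simp: BB_sc[of 1, simplified sc_1] J_in_BB BB_e BB_X BB_mult)

lemma Gamma_commute:
  assumes g: "g \<in> Gamma (Suc p)" and u: "u \<in> BB p"
  shows "u * g = g * u"
proof -
  have J: "u * J (Suc p) = J (Suc p) * u"
    using J_commute[OF BB_Suc[OF u]] .
  have e: "u * e (Suc p) = e (Suc p) * u"
    using BB_commute_e_Suc[OF u] .
  from g show ?thesis
  proof (cases rule: GammaE)
    case eJ
    then show ?thesis
      using J e by (metis mult.assoc)
  qed (simp_all add: J e BB_commute_X_Suc[OF u])
qed

inductive_set bispan :: "nat \<Rightarrow> 'a set" for k where
  sandwich: "w \<in> BB k \<Longrightarrow> g \<in> Gamma k \<Longrightarrow> w' \<in> BB k \<Longrightarrow> w * g * w' \<in> bispan k"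
| add: "a \<in> bispan k \<Longrightarrow> b \<in> bispan k \<Longrightarrow> a + b \<in> bispan k"

lemma BB_mult_bispan: "s \<in> bispan k \<Longrightarrow> u \<in> BB k \<Longrightarrow> u * s \<in> bispan k"
proof (induction rule: bispan.induct)
  case (sandwich w g w')
  then show ?case
    using bispan.sandwich[of "u * w" k g w'] BB_mult by (simp add: mult.assoc)
qed (simp add: distrib_left bispan.add)

lemma bispan_mult_BB: "s \<in> bispan k \<Longrightarrow> u \<in> BB k \<Longrightarrow> s * u \<in> bispan k"
proof (induction rule: bispan.induct)
  case (sandwich w g w')
  then show ?case
    using bispan.sandwich[of w k g "w' * u"] BB_mult by (simp add: mult.assoc)
qed (simp add: distrib_right bispan.add)

lemma BB_Gamma_bispan: "w \<in> BB k \<Longrightarrow> g \<in> Gamma k \<Longrightarrow> w * g \<in> bispan k"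
  using bispan.sandwich[of w k g 1] BB_one by simp

lemma Gamma_BB_bispan: "g \<in> Gamma k \<Longrightarrow> w \<in> BB k \<Longrightarrow> g * w \<in> bispan k"
  using bispan.sandwich[of 1 k g w] BB_one by simp

lemma Gamma_bispan: "g \<in> Gamma k \<Longrightarrow> g \<in> bispan k"
  using Gamma_BB_bispan[of g k 1] BB_one by simp

lemma BB_bispan: "a \<in> BB k \<Longrightarrow> a \<in> bispan k"
  using BB_Gamma_bispan[OF _ Gamma_1] by simp

lemma bispan_sc: "s \<in> bispan k \<Longrightarrow> sc r * s \<in> bispan k"
  using BB_mult_bispan BB_sc by blast

lemma bispan_diff: "a \<in> bispan k \<Longrightarrow> b \<in> bispan k \<Longrightarrow> a - b \<in> bispan k"
  using bispan.add[of a k "sc (- 1) * b"] bispan_sc[of b k "- 1"] by (simp add: sc_minus sc_1)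

lemma X_J_bispan: "X (Suc p) * J (Suc p) \<in> bispan (Suc p)"
proof -
  let ?k = "Suc p"
  have e_J_X: "e ?k * (J p * X ?k) = sc lami * (e ?k * J ?k)"
    using e_Xi_self[of ?k] by (simp add: J_X_eq mult.assoc[symmetric])
  have "X ?k * J ?k = (X ?k * X ?k) * (J p * X ?k)"
    by (simp add: J.simps mult.assoc)
  also have "\<dots> = (1 + \<delta> * X ?k - sc (delta q qi * lam) * e ?k) * (J p * X ?k)"
    using X_X_self[of ?k] by simp
  also have "\<dots> = J p * X ?k + \<delta> * J ?k - sc (delta q qi * lam) * (e ?k * (J p * X ?k))"
    by (simp add: J.simps algebra_simps)
  also have "\<dots> = J p * X ?k + \<delta> * J ?k - sc (delta q qi * lam) * (sc lami * (e ?k * J ?k))"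
    by (simp only: e_J_X)
  also have "\<dots> \<in> bispan ?k"
    using BB_Gamma_bispan[OF J_in_BB[of p] Gamma_X[of ?k]]
    by (intro bispan_diff bispan.add bispan_sc) (simp_all add: Gamma_bispan Gamma_J Gamma_eJ)
  finally show ?thesis .
qed

definition compressible :: "nat \<Rightarrow> bool" where
  "compressible k \<longleftrightarrow> (\<forall>a\<in>BB (Suc k). \<exists>b\<in>BB k. e (Suc k) * a * e (Suc k) = b * e (Suc k))"

definition spanned :: "nat \<Rightarrow> bool" where
  "spanned k \<longleftrightarrow> BB (Suc k) \<subseteq> bispan k"

lemma generator_Gamma_e_compress:
  assumes k: "k = Suc p" and g: "g = X k \<or> g = e k" and \<gamma>: "\<gamma> \<in> Gamma p"
    and comp: "compressible p"
  shows "\<exists>c\<in>BB k. g * (\<gamma> * e k) = c * e k"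
  using \<gamma>
proof (cases rule: GammaE)
  case one
  have "1 \<le> k" using k by simp
  then show ?thesis
    using g one X_e_self e_e_self BB_sc by auto
next
  case J
  obtain b where "b \<in> BB p" "e k * J p * e k = b * e k"
    using comp J_in_BB[of p] k unfolding compressible_def by blast
  then show ?thesis
    using g J k X_J_e[of p] Jinv_in_BB[of p] BB_Suc by (auto simp: mult.assoc)
next
  case e
  have adj: "adjacent k p"
    using e(1) k adjacent_Suc by simp
  show ?thesis
    using g
  proof
    assume "g = X k"
    then show ?thesis
      using e X_e_e[OF adj] BB_Xi[OF e(1), of k] k by (auto simp: mult.assoc)
  next
    assume "g = e k"
    then show ?thesis
      using e e_e_e[OF adj] BB_one by (intro bexI[of _ 1]) (simp_all add: mult.assoc)
  qed
next
  case X
  have adj: "adjacent k p"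
    using X(1) k adjacent_Suc by simp
  have "X k * (X p * e k) = e p * e k" "e k * (X p * e k) = sc lami * e k"
    using X_X_e[OF adj] e_X_e[OF adj] by (simp_all add: mult.assoc)
  then show ?thesis
    using g X BB_e[OF X(1), of k] BB_sc k by auto
next
  case eJ
  then obtain r where p: "p = Suc r"
    by (cases p) auto
  have "X k * (\<gamma> * e k) = (sc lam * Xi p * Jinv r) * e k"
    "e k * (\<gamma> * e k) = (sc lam * Jinv r) * e k"
    using X_e_J_e[of r] e_e_J_e[of r] eJ(2) k p by (simp_all add: mult.assoc)
  moreover have "sc lam * Xi p * Jinv r \<in> BB k" "sc lam * Jinv r \<in> BB k"
    using BB_Suc[OF Jinv_in_BB[of r]] BB_Xi[OF eJ(1), of k] k p by (auto intro: BB_mult BB_sc)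
  ultimately show ?thesis
    using g by auto
qed

lemma X_Gamma_X_bispan:
  assumes k: "k = Suc p" and \<gamma>: "\<gamma> \<in> Gamma p"
  shows "X k * \<gamma> * X k \<in> bispan k"
  using \<gamma>
proof (cases rule: GammaE)
  case one
  have k1: "1 \<le> k" using k by simp
  then have "X k * \<gamma> * X k = 1 + \<delta> * X k - sc (delta q qi * lam) * e k"
    using one X_X_self by simp
  also have "\<dots> \<in> bispan k"
    using k1 by (intro bispan_diff bispan.add bispan_sc)
      (simp_all add: BB_bispan BB_one Gamma_bispan Gamma_X Gamma_e)
  finally show ?thesis .
next
  case J
  then show ?thesis
    using k Gamma_bispan[OF Gamma_J, of k] by (simp add: J.simps)
next
  case e
  have adj: "adjacent k p"
    using e(1) k adjacent_Suc by simp
  have "Xi p \<in> BB k" "e k \<in> Gamma k"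
    using BB_Xi[OF e(1)] Gamma_e k by simp_all
  then show ?thesis
    using e X_e_X[OF adj] bispan.sandwich by simp
next
  case X
  have adj: "adjacent k p"
    using X(1) k adjacent_Suc by simp
  have "X p \<in> BB k" "X k \<in> Gamma k"
    using BB_X[OF X(1)] Gamma_X k by simp_all
  then show ?thesis
    using X X_braid[OF adj] bispan.sandwich by simp
next
  case eJ
  have adj: "adjacent k p"
    using eJ(1) k adjacent_Suc by simp
  have X_p: "X p \<in> BB k" and Xi_p: "Xi p \<in> BB k"
    using BB_X[OF eJ(1)] BB_Xi[OF eJ(1)] k by simp_all
  have "X k * \<gamma> * X k = (X k * e p * Xi k) * J k"
    using eJ(2) k J_X_eq[of p] by (simp add: mult.assoc)
  also have "\<dots> = Xi p * e k * (X p * J k)"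
    using X_e_Xi[OF adj] by (simp add: mult.assoc)
  also have "\<dots> = Xi p * (e k * J k) * X p"
    using J_commute[OF X_p] by (simp add: mult.assoc)
  also have "\<dots> \<in> bispan k"
    using bispan.sandwich[OF Xi_p _ X_p] Gamma_eJ k by simp
  finally show ?thesis .
qed

lemma e_Gamma_X_bispan:
  assumes k: "k = Suc p" and \<gamma>: "\<gamma> \<in> Gamma p"
  shows "e k * \<gamma> * X k \<in> bispan k"
  using \<gamma>
proof (cases rule: GammaE)
  case one
  have "1 \<le> k" using k by simp
  then show ?thesis
    using one e_X_self bispan_sc[OF Gamma_bispan[OF Gamma_e]] by simp
next
  case J
  have "1 \<le> k" using k by simp
  have "e k * \<gamma> * X k = (e k * Xi k) * J k"
    using J k J_X_eq[of p] by (simp add: mult.assoc)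
  also have "\<dots> = sc lami * (e k * J k)"
    using e_Xi_self[OF \<open>1 \<le> k\<close>] by (simp add: mult.assoc)
  finally show ?thesis
    using bispan_sc[OF Gamma_bispan[OF Gamma_eJ[OF \<open>1 \<le> k\<close>]]] by simp
next
  case e
  have adj: "adjacent k p"
    using e(1) k adjacent_Suc by simp
  then show ?thesis
    using e e_e_X[OF adj] Gamma_BB_bispan[OF Gamma_e BB_Xi[OF e(1)], of k] k by simp
next
  case X
  have adj: "adjacent k p"
    using X(1) k adjacent_Suc by simp
  then show ?thesis
    using X e_X_X[OF adj] Gamma_BB_bispan[OF Gamma_e BB_e[OF X(1)], of k] k by simp
next
  case eJ
  have adj: "adjacent k p"
    using eJ(1) k adjacent_Suc by simp
  have X_p: "X p \<in> BB k"
    using BB_X[OF eJ(1)] k by simp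
  have "e k * \<gamma> * X k = (e k * e p * Xi k) * J k"
    using eJ(2) k J_X_eq[of p] by (simp add: mult.assoc)
  also have "\<dots> = e k * (X p * J k)"
    using e_e_Xi[OF adj] by (simp add: mult.assoc)
  also have "\<dots> = (e k * J k) * X p"
    using J_commute[OF X_p] by (simp add: mult.assoc)
  finally show ?thesis
    using Gamma_BB_bispan[OF Gamma_eJ X_p] k by simp
qed

lemma generator_Gamma_Gamma_bispan:
  assumes k: "k = Suc p" and g: "g = X k \<or> g = e k" and \<gamma>': "\<gamma>' \<in> Gamma p"
    and \<gamma>: "\<gamma> \<in> Gamma k" and comp: "compressible p"
  shows "g * \<gamma>' * \<gamma> \<in> bispan k"
proof -
  have k1: "1 \<le> k"
    using k by simp
  have g_Gamma: "g \<in> Gamma k"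
    using g Gamma_X[OF k1] Gamma_e[OF k1] by auto
  have \<gamma>'_BB: "\<gamma>' \<in> BB k"
    using Gamma_in_BB[OF \<gamma>'] k by simp
  from \<gamma> show ?thesis
  proof (cases rule: GammaE)
    case one
    then show ?thesis
      using Gamma_BB_bispan[OF g_Gamma \<gamma>'_BB] by simp
  next
    case J
    have "g * \<gamma>' * \<gamma> = (g * J k) * \<gamma>'"
      using J J_commute[OF \<gamma>'_BB] by (simp add: mult.assoc)
    moreover have "g * J k \<in> bispan k"
      using g X_J_bispan[of p] Gamma_bispan[OF Gamma_eJ[OF k1]] k by auto
    ultimately show ?thesis
      using bispan_mult_BB \<gamma>'_BB by simp
  next
    case e
    obtain c where "c \<in> BB k" "g * (\<gamma>' * e k) = c * e k"
      using generator_Gamma_e_compress[OF k g \<gamma>' comp] by blast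
    then show ?thesis
      using e BB_Gamma_bispan[OF _ Gamma_e[OF k1]] by (simp add: mult.assoc)
  next
    case X
    then show ?thesis
      using g X_Gamma_X_bispan[OF k \<gamma>'] e_Gamma_X_bispan[OF k \<gamma>'] by auto
  next
    case eJ
    obtain c where "c \<in> BB k" "g * (\<gamma>' * e k) = c * e k"
      using generator_Gamma_e_compress[OF k g \<gamma>' comp] by blast
    then show ?thesis
      using eJ BB_Gamma_bispan[OF _ Gamma_eJ[OF k1]] by (simp add: mult.assoc[symmetric])
  qed
qed

lemma e_J_e_compress:
  assumes k: "k = Suc p" and comp: "compressible p"
  shows "\<exists>b\<in>BB k. e (Suc k) * J k * e (Suc k) = b * e (Suc k)"
proof -
  let ?K = "Suc k"
  have adj: "adjacent ?K k"
    using adjacent_Suc k by simp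
  obtain b where b: "b \<in> BB p" "e k * J p * e k = b * e k"
    using comp J_in_BB[of p] k unfolding compressible_def by blast
  have J_p: "J p \<in> BB k" and Jinv_p: "Jinv p \<in> BB k" and b_k: "b \<in> BB k"
    using J_in_BB[of p] Jinv_in_BB[of p] BB_Suc[OF b(1)] k by simp_all
  have e_X: "e ?K * (X k * z) = e ?K * (e k * (Xi ?K * z))" for z
    using mult3_eq_tail[OF e_e_Xi[OF adj]] by (simp add: mult.assoc)
  have Xi_J: "Xi ?K * (J p * z) = J p * (Xi ?K * z)" for z
    using commute_imp_left_commute[OF BB_commute_Xi_Suc[OF J_p], symmetric] by simp
  have e_J_e_e: "e ?K * (e k * (J p * (e k * e ?K))) = b * e ?K"
  proof -
    have "e ?K * (e k * (J p * (e k * e ?K))) = e ?K * (b * (e k * e ?K))"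
      using b(2) by (simp add: mult.assoc[symmetric])
    also have "\<dots> = b * (e ?K * e k * e ?K)"
      using BB_commute_e_Suc[OF b_k] by (simp add: mult.assoc[symmetric])
    finally show ?thesis
      using e_e_e[OF adj] by simp
  qed
  have e_e_J_e: "e ?K * (e k * (J p * e ?K)) = J p * e ?K"
    using e_e_J_e_absorb[of p] k by simp
  have e_e_J_X_e: "e ?K * (e k * (J p * (X k * e ?K))) = Jinv p * e ?K"
    using e_e_J_X_e[of p] k by simp
  have J_k: "J k = X k * J p * X k"
    using k by (simp add: J.simps)
  have "e ?K * J k * e ?K = e ?K * (e k * (J p * (Xi ?K * (X k * e ?K))))"
    by (simp add: J_k mult.assoc e_X Xi_J)
  also have "\<dots> = e ?K * (e k * (J p * (e k * e ?K))) - \<delta> * (e ?K * (e k * (J p * (X k * e ?K))))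
      + \<delta> * (sc lami * (e ?K * (e k * (J p * e ?K))))"
    \<comment> \<open>instances only: with a scalar as its first factor sc_left_commute loops\<close>
    by (simp only: Xi_X_e[OF adj] distrib_left right_diff_distrib
        sc_left_commute[of "J p"] sc_left_commute[of "e k"] sc_left_commute[of "e ?K"])
  also have "\<dots> = b * e ?K - \<delta> * (Jinv p * e ?K) + \<delta> * (sc lami * (J p * e ?K))"
    by (simp only: e_J_e_e e_e_J_X_e e_e_J_e)
  also have "\<dots> = (b - \<delta> * Jinv p + \<delta> * sc lami * J p) * e ?K"
    by (simp add: algebra_simps)
  finally show ?thesis
    using b_k J_p Jinv_p by (blast intro: BB_add BB_diff BB_mult BB_sc)
qed

lemma Gamma_compress_0: "g \<in> Gamma 0 \<Longrightarrow> \<exists>b\<in>BB 0. e (Suc 0) * g * e (Suc 0) = b * e (Suc 0)"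
  unfolding Gamma_def using e_e_self[of 1] e_Y_e BB_sc by (auto simp: One_nat_def)

lemma Gamma_compress:
  assumes k: "k = Suc p" and comp: "compressible p" and g: "g \<in> Gamma k"
  shows "\<exists>b\<in>BB k. e (Suc k) * g * e (Suc k) = b * e (Suc k)"
proof -
  let ?K = "Suc k"
  have adj: "adjacent ?K k"
    using adjacent_Suc k by simp
  from g show ?thesis
  proof (cases rule: GammaE)
    case one
    then show ?thesis using e_e_self[of ?K] BB_sc by auto
  next
    case J
    then show ?thesis using e_J_e_compress[OF k comp] by simp
  next
    case e
    then show ?thesis using e_e_e[OF adj] BB_one by (intro bexI[of _ 1]) simp_all
  next
    case X
    then show ?thesis using e_X_e[OF adj] BB_sc by auto
  next
    case eJ
    then have "e ?K * g * e ?K = (sc lam * Jinv p) * e ?K"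
      using e_e_J_e[of p] k by (simp add: mult.assoc)
    then show ?thesis
      using BB_mult[OF BB_sc Jinv_in_BB[of p]] k by blast
  qed
qed

lemma compressible_if_spanned:
  assumes span: "spanned k"
    and Gamma: "\<And>g. g \<in> Gamma k \<Longrightarrow> \<exists>b\<in>BB k. e (Suc k) * g * e (Suc k) = b * e (Suc k)"
  shows "compressible k"
proof -
  have "\<exists>b\<in>BB k. e (Suc k) * s * e (Suc k) = b * e (Suc k)" if "s \<in> bispan k" for s
    using that
  proof induction
    case (sandwich w g w')
    obtain b where b: "b \<in> BB k" "e (Suc k) * g * e (Suc k) = b * e (Suc k)"
      using Gamma[OF sandwich(2)] by blast
    have "e (Suc k) * (w * g * w') * e (Suc k) = w * (e (Suc k) * g * e (Suc k)) * w'"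
      using BB_commute_e_Suc[OF sandwich(1)] BB_commute_e_Suc[OF sandwich(3)]
      by (simp add: mult.assoc) (simp add: mult.assoc[symmetric])
    also have "\<dots> = (w * b * w') * e (Suc k)"
      using b(2) BB_commute_e_Suc[OF sandwich(3)] by (simp add: mult.assoc)
    finally show ?case
      using b(1) sandwich by (blast intro: BB_mult)
  next
    case (add a c)
    then obtain b1 b2 where "b1 \<in> BB k" "e (Suc k) * a * e (Suc k) = b1 * e (Suc k)"
      "b2 \<in> BB k" "e (Suc k) * c * e (Suc k) = b2 * e (Suc k)"
      by blast
    then show ?case
      by (intro bexI[of _ "b1 + b2"]) (auto simp: algebra_simps intro: BB_add)
  qed
  then show ?thesis
    using span unfolding compressible_def spanned_def by blast
qed

lemma spannedI:
  assumes Y: "\<And>s. s \<in> bispan k \<Longrightarrow> k = 0 \<Longrightarrow> Y * s \<in> bispan k"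
    and X: "\<And>s. s \<in> bispan k \<Longrightarrow> 1 \<le> k \<Longrightarrow> X k * s \<in> bispan k"
    and e: "\<And>s. s \<in> bispan k \<Longrightarrow> 1 \<le> k \<Longrightarrow> e k * s \<in> bispan k"
  shows "spanned k"
proof -
  have "\<forall>s\<in>bispan k. a * s \<in> bispan k" if "a \<in> BB (Suc k)" for a
    using that
  proof induction
    case (scal r)
    then show ?case using bispan_sc by blast
  next
    case genY
    then show ?case using Y BB_mult_bispan[OF _ BB_Y] by (cases k) auto
  next
    case (genX i)
    then show ?case using X BB_mult_bispan BB_X by (cases "i = k") auto
  next
    case (gene i)
    then show ?case using e BB_mult_bispan BB_e by (cases "i = k") auto
  next
    case (add a b)
    then show ?case by (simp add: distrib_right bispan.add)
  next
    case (mult a b)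
    then show ?case by (simp add: mult.assoc)
  qed
  then show ?thesis
    unfolding spanned_def using Gamma_bispan[OF Gamma_1] by force
qed

lemma spanned_0: "spanned 0"
proof (rule spannedI)
  fix s assume "s \<in> bispan 0"
  then show "Y * s \<in> bispan 0"
  proof induction
    case (sandwich w g w')
    have "Y * g \<in> bispan 0"
    proof -
      have "g = 1 \<or> g = Y"
        using sandwich(2) unfolding Gamma_def by simp
      moreover have "Y * Y \<in> bispan 0"
        using Y_Y bispan.add[OF bispan_sc[OF Gamma_bispan[OF Gamma_J[of 0]]] BB_bispan[OF BB_sc]]
        by simp
      ultimately show ?thesis
        using Gamma_bispan[OF Gamma_J[of 0]] by auto
    qed
    moreover have "Y * (w * g * w') = w * (Y * g) * w'"
      using BB_commute[OF sandwich(1), of Y] by (simp add: sc_commute mult.assoc[symmetric])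
    ultimately show ?case
      using bispan_mult_BB[OF BB_mult_bispan[OF _ sandwich(1)] sandwich(3)] by simp
  next
    case (add a b)
    then show ?case by (simp add: distrib_left bispan.add)
  qed
qed simp_all

lemma generator_BB_Gamma_bispan:
  assumes k: "k = Suc p" and span: "spanned p" and comp: "compressible p"
    and g: "g = X k \<or> g = e k" and w: "w \<in> BB k" and \<gamma>: "\<gamma> \<in> Gamma k"
  shows "g * w * \<gamma> \<in> bispan k"
proof -
  have "w \<in> bispan p"
    using span w k unfolding spanned_def by blast
  then show ?thesis
  proof induction
    case (sandwich u \<gamma>' u')
    have "u * g = g * u"
      using g BB_commute_X_Suc[OF sandwich(1)] BB_commute_e_Suc[OF sandwich(1)] k by auto
    moreover have "u' * \<gamma> = \<gamma> * u'"
      using Gamma_commute[of \<gamma> p u'] \<gamma> sandwich(3) k by simp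
    ultimately have "g * (u * \<gamma>' * u') * \<gamma> = u * (g * \<gamma>' * \<gamma>) * u'"
      by (simp add: mult.assoc) (simp add: mult.assoc[symmetric])
    moreover have "g * \<gamma>' * \<gamma> \<in> bispan k"
      using generator_Gamma_Gamma_bispan[OF k g sandwich(2) \<gamma> comp] .
    moreover have "u \<in> BB k" "u' \<in> BB k"
      using BB_Suc sandwich(1,3) k by auto
    ultimately show ?case
      using BB_mult_bispan bispan_mult_BB by simp
  next
    case (add a b)
    then show ?case by (simp add: distrib_left distrib_right bispan.add)
  qed
qed

lemma spanned_Suc:
  assumes span: "spanned p" and comp: "compressible p"
  shows "spanned (Suc p)"
proof -
  have "g * s \<in> bispan (Suc p)"
    if g: "g = X (Suc p) \<or> g = e (Suc p)" and s: "s \<in> bispan (Suc p)" for g s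
    using s
  proof induction
    case (sandwich w \<gamma> w')
    then show ?case
      using generator_BB_Gamma_bispan[OF refl span comp g] bispan_mult_BB
      by (simp add: mult.assoc[symmetric])
  next
    case (add a b)
    then show ?case by (simp add: distrib_left bispan.add)
  qed
  then show ?thesis
    by (intro spannedI) auto
qed

lemma spanned_compressible: "spanned k \<and> compressible k"
proof (induction k)
  case 0
  then show ?case
    using spanned_0 compressible_if_spanned[OF spanned_0 Gamma_compress_0] by simp
next
  case (Suc p)
  then have "spanned (Suc p)"
    using spanned_Suc by blast
  moreover have "compressible (Suc p)"
    using compressible_if_spanned[OF \<open>spanned (Suc p)\<close> Gamma_compress[OF refl]] Suc by blast
  ultimately show ?case ..
qed

lemma e_BB_e_compress:
  "a \<in> BB (Suc k) \<Longrightarrow> \<exists>b\<in>BB k. e (Suc k) * a * e (Suc k) = b * e (Suc k)"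
  using spanned_compressible[of k] unfolding compressible_def by blast

abbreviation "\<epsilon> \<equiv> eps sc x Y X e"
abbreviation "tr \<equiv> trn sc x Y X e"

lemma eps_eqI:
  assumes b: "b \<in> BB n" and eq: "e (Suc n) * a * e (Suc n) = sc x * b * e (Suc n)"
  shows "\<epsilon> n a = b"
  unfolding eps_def
proof (rule the_equality)
  show "b \<in> BB n \<and> e (n + 1) * a * e (n + 1) = sc x * b * e (n + 1)"
    using b eq by simp
next
  fix b' assume b': "b' \<in> BB n \<and> e (n + 1) * a * e (n + 1) = sc x * b' * e (n + 1)"
  then have "sc xi * (sc x * b' * e (Suc n)) = sc xi * (sc x * b * e (Suc n))"
    using eq by simp
  then have "b' * e (Suc n) = b * e (Suc n)"
    using sc_x_xi by (simp add: mult.assoc[symmetric] sc_swap[of xi x])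
  then have "sc xi * b' * e (n + 1) = sc xi * b * e (n + 1)"
    by (simp add: mult.assoc)
  then show "b' = b"
    using mult_e_inj b' b by blast
qed

lemma eps_in_BB_and_e_eq:
  assumes a: "a \<in> BB (Suc n)"
  shows "\<epsilon> n a \<in> BB n \<and> e (Suc n) * a * e (Suc n) = sc x * \<epsilon> n a * e (Suc n)"
proof -
  obtain b where b: "b \<in> BB n" "e (Suc n) * a * e (Suc n) = b * e (Suc n)"
    using e_BB_e_compress[OF a] by blast
  have "e (Suc n) * a * e (Suc n) = sc x * (sc xi * b) * e (Suc n)"
    using b(2) sc_x_xi by (simp add: mult.assoc[symmetric])
  moreover have "sc xi * b \<in> BB n"
    using BB_mult[OF BB_sc b(1)] .
  ultimately show ?thesis
    using eps_eqI by simp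
qed

lemma eps_sc: "\<epsilon> n (sc r) = sc r"
proof (rule eps_eqI[OF BB_sc])
  have "e (Suc n) * sc r * e (Suc n) = sc r * (e (Suc n) * e (Suc n))"
    by (simp add: sc_commute[of r "e (Suc n)", symmetric] mult.assoc)
  also have "\<dots> = sc r * sc x * e (Suc n)"
    using e_e_self[of "Suc n"] by (simp add: mult.assoc)
  finally show "e (Suc n) * sc r * e (Suc n) = sc x * sc r * e (Suc n)"
    using sc_swap[of r x] by simp
qed

lemma eps_sc_mult:
  assumes a: "a \<in> BB (Suc n)"
  shows "\<epsilon> n (sc t * a) = sc t * \<epsilon> n a"
proof (rule eps_eqI)
  have spec: "\<epsilon> n a \<in> BB n" "e (Suc n) * a * e (Suc n) = sc x * \<epsilon> n a * e (Suc n)"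
    using eps_in_BB_and_e_eq[OF a] by auto
  then show "sc t * \<epsilon> n a \<in> BB n"
    by (simp add: BB_mult BB_sc)
  have "e (Suc n) * (sc t * a) * e (Suc n) = sc t * (e (Suc n) * a * e (Suc n))"
    by (simp add: sc_left_commute[of "e (Suc n)"] mult.assoc)
  also have "\<dots> = sc x * (sc t * \<epsilon> n a) * e (Suc n)"
    using spec(2) sc_swap[of t x] by (simp add: mult.assoc[symmetric])
  finally show "e (Suc n) * (sc t * a) * e (Suc n) = sc x * (sc t * \<epsilon> n a) * e (Suc n)" .
qed

lemma trn_sc: "tr m (sc r) = sc r"
  by (induction m) (simp_all add: eps_sc)

lemma trn_sc_mult: "c \<in> BB n \<Longrightarrow> tr n (sc t * c) = sc t * tr n c"
proof (induction n arbitrary: c)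
  case (Suc m)
  then show ?case
    using eps_in_BB_and_e_eq[OF Suc.prems] by (simp add: eps_sc_mult)
qed simp

lemma eps_trn_sandwich:
  assumes w1: "w1 \<in> BB n" and w2: "w2 \<in> BB n"
    and \<gamma>: "e (Suc n) * \<gamma> * e (Suc n) = sc x * sc \<tau> * e (Suc n)"
  shows "\<epsilon> n (w1 * \<gamma> * w2) = tr (Suc n) \<gamma> * (w1 * w2)
     \<and> tr (Suc n) (w1 * \<gamma> * w2) = tr (Suc n) \<gamma> * tr n (w1 * w2)"
proof -
  have tr_\<gamma>: "tr (Suc n) \<gamma> = sc \<tau>"
    using eps_eqI[OF BB_sc \<gamma>] trn_sc by simp
  have "e (Suc n) * (w1 * \<gamma> * w2) * e (Suc n) = w1 * (e (Suc n) * \<gamma> * e (Suc n)) * w2"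
    using BB_commute_e_Suc[OF w1] BB_commute_e_Suc[OF w2]
    by (simp add: mult.assoc) (simp add: mult.assoc[symmetric])
  also have "\<dots> = w1 * (sc x * sc \<tau> * e (Suc n)) * w2"
    using \<gamma> by simp
  also have "\<dots> = sc x * (sc \<tau> * (w1 * w2)) * e (Suc n)"
    using BB_commute_e_Suc[OF w2] by (simp add: mult.assoc sc_left_commute[of w1])
  finally have "\<epsilon> n (w1 * \<gamma> * w2) = sc \<tau> * (w1 * w2)"
    using eps_eqI BB_mult[OF BB_sc BB_mult[OF w1 w2]] by blast
  then show ?thesis
    using tr_\<gamma> trn_sc_mult[OF BB_mult[OF w1 w2]] by simp
qed

lemma corner_scalar:
  assumes n: "1 \<le> n" and \<gamma>: "\<gamma> \<in> {1, e n, X n, Yk n}"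
  shows "\<exists>\<tau>. e (Suc n) * \<gamma> * e (Suc n) = sc x * sc \<tau> * e (Suc n)"
proof -
  have adj: "adjacent (Suc n) n"
    using adjacent_Suc n by simp
  have "e (Suc n) * 1 * e (Suc n) = sc x * sc 1 * e (Suc n)"
    using e_e_self[of "Suc n"] sc_1 by simp
  moreover have "e (Suc n) * e n * e (Suc n) = sc x * sc xi * e (Suc n)"
    using e_e_e[OF adj] sc_x_xi by simp
  moreover have "e (Suc n) * X n * e (Suc n) = sc x * sc (xi * lami) * e (Suc n)"
    using e_X_e[OF adj] sc_x_xi by (simp add: sc_mult mult.assoc[symmetric])
  moreover have "e (Suc n) * Yk n * e (Suc n) = sc x * sc (xi * A) * e (Suc n)"
    using e_Yk_e[of n] sc_x_xi by (simp add: sc_mult mult.assoc[symmetric])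
  ultimately show ?thesis
    using \<gamma> by blast
qed

end

theorem lemma12:
  fixes sc :: "'r::idom \<Rightarrow> 'a::ring_1"
    and q qi lam lami x xi A q1 :: 'r
    and Y :: 'a and X e :: "nat \<Rightarrow> 'a"
    and n :: nat and w1 w2 \<gamma> :: 'a
  assumes "BB_axioms sc q qi lam lami x xi A q1 Y X e"
    and "1 \<le> n"
    and "w1 \<in> BBset sc Y X e n" and "w2 \<in> BBset sc Y X e n"
    and "\<gamma> \<in> {1, e n, X n, Yn sc q qi Y X e n}"
  shows "eps sc x Y X e n (w1 * \<gamma> * w2) = trn sc x Y X e (Suc n) \<gamma> * (w1 * w2)
     \<and> trn sc x Y X e (Suc n) (w1 * \<gamma> * w2)
         = trn sc x Y X e (Suc n) \<gamma> * trn sc x Y X e n (w1 * w2)"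
proof -
  interpret BB_algebra sc q qi lam lami x xi A q1 Y X e
    using assms(1) by (rule BB_algebra.intro)
  obtain \<tau> where "e (Suc n) * \<gamma> * e (Suc n) = sc x * sc \<tau> * e (Suc n)"
    using corner_scalar[OF assms(2,5)] by blast
  then show ?thesis
    using eps_trn_sandwich[OF assms(3,4)] by blast
qed

end
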